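(* Let $k\ge 1$ and consider the Kneser graph $K(2k+1,k)$. Let $r_{max}=\binom{2k}{k-1}$, and for real $r>0$ define $$\beta(r)=\binom{2k+1}{k}-\frac{1}{r}\binom{2k}{k-1}^2-r.$$ Then for every real $r^*$ with $0<r^*\le r_{max}$, $$\min\{|B(S)| : S\subseteq V,\ r^*\le |S|\le r_{max}\}\;\ge\;\beta(r^* ).$$
   Context: The Kneser graph $K(n,k)$ has as vertices the $k$-element subsets of $[n]$, with two vertices adjacent if and only if they are disjoint. For a graph $G=(V,E)$ and $S\subseteq V$, the boundary of $S$ is $B(S)=\{a\in V\setminus S:\exists b\in S,\ (a,b)\in E\}$. *)

theory Defs
  imports Complex_Main
begin

definition boundary :: "'a set \<Rightarrow> ('a \<Rightarrow> 'a \<Rightarrow> bool) \<Rightarrow> 'a set \<Rightarrow> 'a set" where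
  "boundary V E S = {a \<in> V - S. \<exists>b\<in>S. E a b}"

definition kneser_vertices :: "nat \<Rightarrow> nat \<Rightarrow> nat set set" where
  "kneser_vertices n k = {A. A \<subseteq> {1..n} \<and> card A = k}"

definition kneser_adj :: "nat set \<Rightarrow> nat set \<Rightarrow> bool" where
  "kneser_adj A B \<longleftrightarrow> A \<inter> B = {}"

end

theory Submission
  imports Defs "HOL-Analysis.Convex"
begin

text \<open>
  Let \<open>T\<close> be the set of vertices outside \<open>S\<close> with no neighbour in \<open>S\<close>, so that
  \<open>|B(S)| = |V| - |S| - |T|\<close>. With \<open>R = C(2k, k-1)\<close> it suffices to show \<open>|S| |T| \<le> R\<^sup>2\<close>,
  because \<open>r \<le> |S| \<le> R\<close> then gives \<open>|S| + |T| \<le> r + R\<^sup>2/r\<close>.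

  The bound on \<open>|S| |T|\<close> is a Hoffman-type argument. The odd graph \<open>K(2k+1, k)\<close> is
  \<open>(k+1)\<close>-regular and its adjacency operator \<open>A\<close> satisfies \<open>\<parallel>A f\<parallel> \<le> k \<parallel>f\<parallel>\<close> for \<open>f\<close>
  orthogonal to the constants. Since there are no edges between \<open>S\<close> and \<open>T\<close>, Cauchy-Schwarz
  applied to \<open>\<langle>1\<^sub>T - |T|/N, A (1\<^sub>S - |S|/N)\<rangle> = -(k+1) |S| |T| / N\<close> yields
  \<open>(2k+1)\<^sup>2 |S| |T| \<le> k\<^sup>2 N\<^sup>2 = (2k+1)\<^sup>2 R\<^sup>2\<close>.

  The spectral bound comes from \<open>\<parallel>A f\<parallel>\<^sup>2 = \<parallel>D f\<parallel>\<^sup>2 + \<parallel>f\<parallel>\<^sup>2\<close>, where \<open>D\<close> sums over the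
  \<open>k\<close>-supersets of a \<open>(k-1)\<close>-set, together with \<open>\<parallel>D f\<parallel>\<^sup>2 \<le> (j-1)(n-j) \<parallel>f\<parallel>\<^sup>2\<close> for \<open>f\<close>
  orthogonal to the constants on the \<open>j\<close>-subsets of \<open>[n]\<close>; the latter follows by induction on
  \<open>j\<close> from the commutation relation \<open>D U = U D + (n - 2j) I\<close> of the up and down operators of
  the Boolean lattice and Cauchy-Schwarz.
\<close>

lemma finite_kneser_vertices [simp]: "finite (kneser_vertices n j)"
  unfolding kneser_vertices_def by (rule finite_subset[of _ "Pow {1..n}"]) auto

lemma card_kneser_vertices: "card (kneser_vertices n j) = n choose j"
  unfolding kneser_vertices_def using n_subsets[of "{1..n}" j] by simp

lemma sum_if_const_card:
  "finite A \<Longrightarrow> (\<Sum>x\<in>A. if P x then c else 0) = (c::real) * real (card {x\<in>A. P x})"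
  by (simp add: sum.inter_filter[symmetric])

lemma card_kneser_vertices_subset:
  assumes "C \<subseteq> {1..n}"
  shows "card {U \<in> kneser_vertices n m. U \<subseteq> C} = card C choose m"
proof -
  have "{U \<in> kneser_vertices n m. U \<subseteq> C} = {U. U \<subseteq> C \<and> card U = m}"
    using assms unfolding kneser_vertices_def by blast
  moreover have "finite C" using assms finite_subset by blast
  ultimately show ?thesis by (simp add: n_subsets)
qed

lemma card_kneser_vertices_common_subset:
  assumes "Z \<subseteq> {1..n}"
  shows "card {U \<in> kneser_vertices n m. U \<subseteq> Z \<and> U \<subseteq> Z'} = card (Z \<inter> Z') choose m"
proof -
  have common: "{U \<in> kneser_vertices n m. U \<subseteq> Z \<and> U \<subseteq> Z'} = {U \<in> kneser_vertices n m. U \<subseteq> Z \<inter> Z'}"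
    by blast
  show ?thesis unfolding common by (rule card_kneser_vertices_subset) (use assms in blast)
qed

lemma card_subsets_containing:
  assumes "finite N" "B \<subseteq> N"
  shows "card {Y. Y \<subseteq> N \<and> card Y = j \<and> B \<subseteq> Y}
       = (if card B \<le> j then (card N - card B) choose (j - card B) else 0)"
proof (cases "card B \<le> j")
  case False
  then have "{Y. Y \<subseteq> N \<and> card Y = j \<and> B \<subseteq> Y} = {}"
    using assms by (auto dest: card_mono[OF finite_subset[OF _ assms(1)]])
  with False show ?thesis by (metis card.empty)
next
  case True
  have fB: "finite B" using assms finite_subset by blast
  have "bij_betw (\<lambda>Y. Y - B) {Y. Y \<subseteq> N \<and> card Y = j \<and> B \<subseteq> Y}
                              {C. C \<subseteq> N - B \<and> card C = j - card B}"
  proof (rule bij_betw_byWitness[where f' = "\<lambda>C. C \<union> B"])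
    show "(\<lambda>C. C \<union> B) ` {C. C \<subseteq> N - B \<and> card C = j - card B}
            \<subseteq> {Y. Y \<subseteq> N \<and> card Y = j \<and> B \<subseteq> Y}"
    proof clarify
      fix C assume C: "C \<subseteq> N - B" "card C = j - card B"
      then have "finite C" "C \<inter> B = {}" using assms finite_subset by blast+
      with C True fB show "C \<union> B \<subseteq> N \<and> card (C \<union> B) = j \<and> B \<subseteq> C \<union> B"
        using assms by (simp add: card_Un_disjoint) blast
    qed
  qed (use fB in \<open>auto simp: card_Diff_subset\<close>)
  then have "card {Y. Y \<subseteq> N \<and> card Y = j \<and> B \<subseteq> Y} = card {C. C \<subseteq> N - B \<and> card C = j - card B}"
    by (rule bij_betw_same_card)
  also have "\<dots> = (card N - card B) choose (j - card B)"
    using assms by (simp add: n_subsets card_Diff_subset fB)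
  finally show ?thesis using True by simp
qed

lemma card_kneser_vertices_superset:
  assumes "B \<subseteq> {1..n}"
  shows "card {Y \<in> kneser_vertices n j. B \<subseteq> Y}
       = (if card B \<le> j then (n - card B) choose (j - card B) else 0)"
proof -
  have "{Y \<in> kneser_vertices n j. B \<subseteq> Y} = {Y. Y \<subseteq> {1..n} \<and> card Y = j \<and> B \<subseteq> Y}"
    unfolding kneser_vertices_def by blast
  then show ?thesis using card_subsets_containing[OF _ assms, of j] by simp
qed

lemma sum_square_incidence_sum:
  fixes f :: "'b \<Rightarrow> real"
  assumes "finite V" "finite X"
  shows "(\<Sum>x\<in>X. (\<Sum>y\<in>V. if P x y then f y else 0)^2)
       = (\<Sum>y\<in>V. \<Sum>y'\<in>V. f y * f y' * real (card {x\<in>X. P x y \<and> P x y'}))"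
proof -
  have "(\<Sum>x\<in>X. (\<Sum>y\<in>V. if P x y then f y else 0)^2)
      = (\<Sum>y\<in>V. \<Sum>y'\<in>V. \<Sum>x\<in>X. (if P x y then f y else 0) * (if P x y' then f y' else 0))"
    by (simp add: power2_eq_square sum_product) (subst sum.swap, subst (2) sum.swap, simp)
  also have "\<dots> = (\<Sum>y\<in>V. \<Sum>y'\<in>V. \<Sum>x\<in>X. if P x y \<and> P x y' then f y * f y' else 0)"
    by (intro sum.cong) auto
  also have "\<dots> = (\<Sum>y\<in>V. \<Sum>y'\<in>V. f y * f y' * real (card {x\<in>X. P x y \<and> P x y'}))"
    using assms(2) by (simp add: sum_if_const_card)
  finally show ?thesis .
qed

section \<open>Up and down operators on the layers of the Boolean lattice\<close>

text \<open>\<open>kneser_vertices n j\<close> serves as the \<open>j\<close>-th layer of the Boolean lattice on \<open>{1..n}\<close>.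
  \<open>superset_sum n j\<close> is the down operator \<open>D\<close> from layer \<open>j\<close> to layer \<open>j-1\<close>, and
  \<open>subset_sum n m\<close> is the up operator \<open>U\<close> from layer \<open>m\<close> to layer \<open>m+1\<close>.\<close>

definition superset_sum :: "nat \<Rightarrow> nat \<Rightarrow> (nat set \<Rightarrow> real) \<Rightarrow> nat set \<Rightarrow> real" where
  "superset_sum n j f Z = (\<Sum>Y\<in>kneser_vertices n j. if Z \<subseteq> Y then f Y else 0)"

definition subset_sum :: "nat \<Rightarrow> nat \<Rightarrow> (nat set \<Rightarrow> real) \<Rightarrow> nat set \<Rightarrow> real" where
  "subset_sum n m g Y = (\<Sum>Z\<in>kneser_vertices n m. if Z \<subseteq> Y then g Z else 0)"

lemma sum_superset_sum:
  "(\<Sum>Z\<in>kneser_vertices n m. superset_sum n (Suc m) f Z) = real (Suc m) * (\<Sum>Y\<in>kneser_vertices n (Suc m). f Y)"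
proof -
  have "(\<Sum>Z\<in>kneser_vertices n m. superset_sum n (Suc m) f Z)
      = (\<Sum>Y\<in>kneser_vertices n (Suc m). \<Sum>Z\<in>kneser_vertices n m. if Z \<subseteq> Y then f Y else 0)"
    unfolding superset_sum_def by (rule sum.swap)
  also have "\<dots> = (\<Sum>Y\<in>kneser_vertices n (Suc m). f Y * real (Suc m))"
  proof (rule sum.cong[OF refl])
    fix Y assume "Y \<in> kneser_vertices n (Suc m)"
    then have "card {Z \<in> kneser_vertices n m. Z \<subseteq> Y} = Suc m"
      using card_kneser_vertices_subset[of Y n m] unfolding kneser_vertices_def by simp
    then show "(\<Sum>Z\<in>kneser_vertices n m. if Z \<subseteq> Y then f Y else 0) = f Y * real (Suc m)"
      by (simp add: sum_if_const_card)
  qed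
  finally show ?thesis by (simp add: sum_distrib_left mult.commute)
qed

lemma sum_square_superset_sum_eq_inner:
  "(\<Sum>Z\<in>kneser_vertices n m. (superset_sum n j f Z)^2)
     = (\<Sum>Y\<in>kneser_vertices n j. f Y * subset_sum n m (superset_sum n j f) Y)"
proof -
  have "(\<Sum>Z\<in>kneser_vertices n m. (superset_sum n j f Z)^2)
      = (\<Sum>Z\<in>kneser_vertices n m. \<Sum>Y\<in>kneser_vertices n j. if Z \<subseteq> Y then f Y * superset_sum n j f Z else 0)"
    unfolding power2_eq_square superset_sum_def[of n j f Z for Z] sum_distrib_right
    by (intro sum.cong refl) auto
  also have "\<dots> = (\<Sum>Y\<in>kneser_vertices n j. \<Sum>Z\<in>kneser_vertices n m.
                      if Z \<subseteq> Y then f Y * superset_sum n j f Z else 0)"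
    by (rule sum.swap)
  also have "\<dots> = (\<Sum>Y\<in>kneser_vertices n j. f Y * subset_sum n m (superset_sum n j f) Y)"
    unfolding subset_sum_def sum_distrib_left by (intro sum.cong refl) auto
  finally show ?thesis .
qed

text \<open>Entrywise form of \<open>D U = U D + (n - 2m) I\<close> on layer \<open>m\<close>.\<close>

lemma card_common_supersets:
  assumes "m \<ge> 1" "Z \<in> kneser_vertices n m" "Z' \<in> kneser_vertices n m"
  shows "real (card {Y \<in> kneser_vertices n (Suc m). Z \<subseteq> Y \<and> Z' \<subseteq> Y})
       = real (card {U \<in> kneser_vertices n (m-1). U \<subseteq> Z \<and> U \<subseteq> Z'})
         + (if Z = Z' then real n - 2 * real m else 0)"
proof -
  have Z: "Z \<subseteq> {1..n}" "Z' \<subseteq> {1..n}" "card Z = m" "card Z' = m"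
    using assms unfolding kneser_vertices_def by auto
  have fin: "finite Z" "finite Z'" using Z finite_subset by blast+
  define a where "a = card (Z \<inter> Z')"
  have up: "card {Y \<in> kneser_vertices n (Suc m). Z \<subseteq> Y \<and> Z' \<subseteq> Y}
      = (if card (Z \<union> Z') \<le> Suc m then (n - card (Z \<union> Z')) choose (Suc m - card (Z \<union> Z')) else 0)"
    using card_kneser_vertices_superset[of "Z \<union> Z'" n "Suc m"] Z by simp
  have down: "card {U \<in> kneser_vertices n (m-1). U \<subseteq> Z \<and> U \<subseteq> Z'} = a choose (m - 1)"
    unfolding a_def using Z by (simp add: card_kneser_vertices_common_subset)
  have union: "card (Z \<union> Z') = 2 * m - a"
    using card_Un_Int[OF fin] Z unfolding a_def by simp
  have "a \<le> m" unfolding a_def using card_mono[OF fin(1), of "Z \<inter> Z'"] Z by simp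
  have mn: "m \<le> n" using card_mono[OF _ Z(1)] Z by simp
  have a_eq: "a = m \<longleftrightarrow> Z = Z'"
    using card_subset_eq[OF fin(1), of "Z \<inter> Z'"] card_subset_eq[OF fin(2), of "Z \<inter> Z'"] Z
    unfolding a_def by auto
  consider "a = m" | "a = m - 1" | "a < m - 1"
    using \<open>a \<le> m\<close> by linarith
  then show ?thesis
  proof cases
    case 1
    moreover have "m choose (m - 1) = m"
      using binomial_symmetric[of "m - 1" m] assms(1) by simp
    ultimately show ?thesis using up down union a_eq mn by (simp add: of_nat_diff)
  next
    case 2
    moreover have "Z \<noteq> Z'" using 2 a_eq assms(1) by linarith
    ultimately show ?thesis using up down union assms(1) by simp
  next
    case 3
    moreover have "Z \<noteq> Z'" using 3 a_eq by linarith
    moreover have "\<not> 2 * m - a \<le> Suc m" using 3 by linarith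
    ultimately show ?thesis using up down union by (simp del: card_0_eq card_eq_0_iff)
  qed
qed

lemma sum_square_subset_sum:
  assumes "m \<ge> 1"
  shows "(\<Sum>Y\<in>kneser_vertices n (Suc m). (subset_sum n m g Y)^2)
       = (\<Sum>U\<in>kneser_vertices n (m-1). (superset_sum n m g U)^2)
         + (real n - 2 * real m) * (\<Sum>Z\<in>kneser_vertices n m. (g Z)^2)"
proof -
  let ?common = "\<lambda>Z Z'. real (card {U \<in> kneser_vertices n (m-1). U \<subseteq> Z \<and> U \<subseteq> Z'})"
  have "(\<Sum>Y\<in>kneser_vertices n (Suc m). (subset_sum n m g Y)^2)
     = (\<Sum>Z\<in>kneser_vertices n m. \<Sum>Z'\<in>kneser_vertices n m.
          g Z * g Z' * real (card {Y \<in> kneser_vertices n (Suc m). Z \<subseteq> Y \<and> Z' \<subseteq> Y}))"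
    unfolding subset_sum_def by (rule sum_square_incidence_sum) simp_all
  also have "\<dots> = (\<Sum>Z\<in>kneser_vertices n m. \<Sum>Z'\<in>kneser_vertices n m. g Z * g Z' * ?common Z Z'
        + (if Z = Z' then (real n - 2 * real m) * (g Z)^2 else 0))"
    by (intro sum.cong refl) (simp add: card_common_supersets[OF assms] distrib_left power2_eq_square)
  also have "\<dots> = (\<Sum>Z\<in>kneser_vertices n m. \<Sum>Z'\<in>kneser_vertices n m. g Z * g Z' * ?common Z Z')
        + (real n - 2 * real m) * (\<Sum>Z\<in>kneser_vertices n m. (g Z)^2)"
    by (simp add: sum.distrib sum_distrib_left)
  also have "(\<Sum>Z\<in>kneser_vertices n m. \<Sum>Z'\<in>kneser_vertices n m. g Z * g Z' * ?common Z Z')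
      = (\<Sum>U\<in>kneser_vertices n (m-1). (superset_sum n m g U)^2)"
    unfolding superset_sum_def by (rule sum_square_incidence_sum[symmetric]) simp_all
  finally show ?thesis .
qed

lemma sum_square_superset_sum_le:
  assumes "1 \<le> j" "j \<le> n" "(\<Sum>Y\<in>kneser_vertices n j. f Y) = 0"
  shows "(\<Sum>Z\<in>kneser_vertices n (j-1). (superset_sum n j f Z)^2)
       \<le> (real j - 1) * (real n - real j) * (\<Sum>Y\<in>kneser_vertices n j. (f Y)^2)"
  using assms
proof (induction j arbitrary: f rule: nat_induct_at_least)
  case base
  have "kneser_vertices n 0 = {{}}"
    unfolding kneser_vertices_def by (auto dest: finite_subset[OF _ finite_atLeastAtMost])
  with base show ?case by (simp add: superset_sum_def)
next
  case (Suc m f)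
  define g where "g = superset_sum n (Suc m) f"
  define F where "F = (\<Sum>Y\<in>kneser_vertices n (Suc m). (f Y)^2)"
  define G where "G = (\<Sum>Z\<in>kneser_vertices n m. (g Z)^2)"
  define H where "H = (\<Sum>Y\<in>kneser_vertices n (Suc m). (subset_sum n m g Y)^2)"
  define \<mu> where "\<mu> = real m * (real n - real (Suc m))"
  have "(\<Sum>Z\<in>kneser_vertices n m. g Z) = 0"
    using sum_superset_sum[of n m f] Suc.prems unfolding g_def by simp
  then have "(\<Sum>U\<in>kneser_vertices n (m-1). (superset_sum n m g U)^2) \<le> (real m - 1) * (real n - real m) * G"
    using Suc.IH[of g] Suc.prems unfolding G_def by simp
  then have H_le: "H \<le> \<mu> * G"
    unfolding H_def sum_square_subset_sum[OF Suc.hyps] G_def[symmetric] \<mu>_def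
    by (simp add: algebra_simps)
  have "G^2 \<le> F * H"
    unfolding F_def H_def G_def g_def sum_square_superset_sum_eq_inner by (rule Cauchy_Schwarz_ineq_sum)
  also have "\<dots> \<le> F * (\<mu> * G)"
    using H_le by (simp add: F_def mult_left_mono sum_nonneg)
  finally have "G * G \<le> (\<mu> * F) * G" by (simp add: power2_eq_square algebra_simps)
  moreover have "G \<ge> 0" "\<mu> * F \<ge> 0"
    using Suc.prems unfolding G_def F_def \<mu>_def by (simp_all add: sum_nonneg)
  ultimately have "G \<le> \<mu> * F"
    by (cases "G = 0") (simp_all add: mult_le_cancel_right)
  then show ?case unfolding G_def F_def g_def \<mu>_def by simp
qed

section \<open>Cross-independent sets in regular graphs\<close>

definition adjacency_op :: "'a set \<Rightarrow> ('a \<Rightarrow> 'a \<Rightarrow> bool) \<Rightarrow> ('a \<Rightarrow> real) \<Rightarrow> 'a \<Rightarrow> real" where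
  "adjacency_op V E f x = (\<Sum>y\<in>V. if E x y then f y else 0)"

lemma mult_le_of_mult_complements_le:
  fixes N s t d \<theta> :: real
  assumes "0 \<le> s" "s \<le> N" "0 \<le> t" "t \<le> N" "0 \<le> d" "0 \<le> \<theta>"
    and "d^2 * (s * t) \<le> \<theta>^2 * ((N - s) * (N - t))"
  shows "(d + \<theta>)^2 * (s * t) \<le> \<theta>^2 * N^2"
proof -
  define u where "u = sqrt (s * t)"
  have u: "0 \<le> u" "u^2 = s * t" unfolding u_def using assms by simp_all
  have "s * t \<le> N * N" using assms by (intro mult_mono) auto
  then have "u \<le> N"
    unfolding u_def using real_sqrt_le_mono assms by fastforce
  have "(2 * u)^2 = 4 * (s * t)" using u(2) by simp
  then have "(s + t)^2 - (2 * u)^2 = (s - t)^2" by (simp add: power2_eq_square algebra_simps)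
  then have "(2 * u)^2 \<le> (s + t)^2" using zero_le_power2[of "s - t"] by linarith
  then have "2 * u \<le> s + t" by (rule power2_le_imp_le) (use assms in simp)
  then have "N * (2 * u) \<le> N * (s + t)" using assms by (simp add: mult_left_mono)
  moreover have "(N - u)^2 - (N - s) * (N - t) = N * (s + t) - N * (2 * u)"
    by (simp add: power2_diff u(2) algebra_simps power2_eq_square[of N])
  ultimately have "(N - s) * (N - t) \<le> (N - u)^2" by linarith
  then have "\<theta>^2 * ((N - s) * (N - t)) \<le> \<theta>^2 * (N - u)^2" by (rule mult_left_mono) simp
  then have "(d * u)^2 \<le> (\<theta> * (N - u))^2"
    using assms(7) u(2) by (simp add: power_mult_distrib)
  then have "d * u \<le> \<theta> * (N - u)"
    by (rule power2_le_imp_le) (simp add: \<open>0 \<le> \<theta>\<close> \<open>u \<le> N\<close>)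
  then have "(d + \<theta>) * u \<le> \<theta> * N" by (simp add: algebra_simps)
  then have "((d + \<theta>) * u)^2 \<le> (\<theta> * N)^2"
    by (rule power_mono) (simp add: assms u)
  then show ?thesis by (simp add: power_mult_distrib u(2))
qed

lemma sum_square_centered_indicator:
  assumes "finite V" "A \<subseteq> V" "V \<noteq> {}"
  shows "(\<Sum>y\<in>V. (of_bool (y \<in> A) - real (card A) / real (card V))^2)
       = real (card A) * (real (card V) - real (card A)) / real (card V)"
proof -
  let ?a = "real (card A)" and ?N = "real (card V)"
  have "(\<Sum>y\<in>V. (of_bool (y \<in> A) - ?a / ?N)^2) = (\<Sum>y\<in>V. (1 - 2 * ?a / ?N) * of_bool (y \<in> A) + (?a / ?N)^2)"
    by (intro sum.cong refl) (simp add: power2_eq_square algebra_simps)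
  also have "\<dots> = (1 - 2 * ?a / ?N) * ?a + ?N * (?a / ?N)^2"
    using assms by (simp add: sum.distrib Int_absorb1 flip: sum_distrib_left)
  also have "\<dots> = ?a * (?N - ?a) / ?N"
    using assms by (simp add: power2_eq_square field_simps)
  finally show ?thesis .
qed

lemma sum_adjacency_op_regular:
  assumes "finite V" "\<And>x y. E x y \<longleftrightarrow> E y x" "\<And>x. x \<in> V \<Longrightarrow> card {y \<in> V. E x y} = d"
  shows "(\<Sum>x\<in>V. adjacency_op V E f x) = real d * (\<Sum>y\<in>V. f y)"
proof -
  have "(\<Sum>x\<in>V. adjacency_op V E f x) = (\<Sum>y\<in>V. \<Sum>x\<in>V. if E x y then f y else 0)"
    unfolding adjacency_op_def by (rule sum.swap)
  also have "\<dots> = (\<Sum>y\<in>V. real d * f y)"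
    using assms by (intro sum.cong refl) (simp add: sum.inter_filter[symmetric])
  finally show ?thesis by (simp flip: sum_distrib_left)
qed

lemma cross_independent_card_mult_le:
  fixes V :: "'a set" and E :: "'a \<Rightarrow> 'a \<Rightarrow> bool" and d :: nat and \<theta> :: real
  assumes V: "finite V"
    and sym: "\<And>x y. E x y \<longleftrightarrow> E y x"
    and regular: "\<And>x. x \<in> V \<Longrightarrow> card {y \<in> V. E x y} = d"
    and spectral: "\<And>f. (\<Sum>y\<in>V. f y) = 0 \<Longrightarrow>
                     (\<Sum>x\<in>V. (adjacency_op V E f x)^2) \<le> \<theta>^2 * (\<Sum>y\<in>V. (f y)^2)"
    and "0 \<le> \<theta>"
    and S: "S \<subseteq> V" and T: "T \<subseteq> V"
    and no_edges: "\<And>x y. x \<in> T \<Longrightarrow> y \<in> S \<Longrightarrow> \<not> E x y"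
  shows "(real d + \<theta>)^2 * (real (card S) * real (card T)) \<le> \<theta>^2 * real (card V)^2"
proof (cases "S = {} \<or> T = {}")
  case True
  then show ?thesis by auto
next
  case False
  define N s t where "N = real (card V)" and "s = real (card S)" and "t = real (card T)"
  have st: "0 < s" "0 < t" "s \<le> N" "t \<le> N"
    using False S T V unfolding N_def s_def t_def by (auto simp: card_gt_0_iff card_mono finite_subset)
  have "V \<noteq> {}" using False S by blast
  define f g where "f y = of_bool (y \<in> S) - s / N" and "g y = of_bool (y \<in> T) - t / N" for y
  have sum_f: "(\<Sum>y\<in>V. f y) = 0"
    using V S \<open>V \<noteq> {}\<close> by (simp add: f_def sum_subtractf s_def N_def Int_absorb1)
  have Af_on_T: "adjacency_op V E f x = - real d * s / N" if "x \<in> T" for x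
  proof -
    have "adjacency_op V E f x = (\<Sum>y\<in>V. if E x y then - s / N else 0)"
      unfolding adjacency_op_def f_def using no_edges[OF that] by (intro sum.cong refl) auto
    also have "\<dots> = - real d * s / N"
      using V regular[of x] that T by (auto simp: sum.inter_filter[symmetric])
    finally show ?thesis .
  qed
  have "(\<Sum>x\<in>V. g x * adjacency_op V E f x)
      = (\<Sum>x\<in>V. of_bool (x \<in> T) * adjacency_op V E f x) - t / N * (\<Sum>x\<in>V. adjacency_op V E f x)"
    by (simp add: g_def left_diff_distrib sum_subtractf sum_distrib_left)
  also have "(\<Sum>x\<in>V. of_bool (x \<in> T) * adjacency_op V E f x) = (\<Sum>x\<in>V. of_bool (x \<in> T) * (- real d * s / N))"
    using Af_on_T by (intro sum.cong refl) simp
  also have "\<dots> = (\<Sum>x\<in>V. of_bool (x \<in> T)) * (- real d * s / N)"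
    by (rule sum_distrib_right[symmetric])
  finally have inner: "(\<Sum>x\<in>V. g x * adjacency_op V E f x) = - real d * s * t / N"
    using sum_adjacency_op_regular[OF V sym regular] sum_f V T by (simp add: t_def Int_absorb1)
  have "(real d * s * t / N)^2 \<le> (\<Sum>x\<in>V. (g x)^2) * (\<Sum>x\<in>V. (adjacency_op V E f x)^2)"
    using Cauchy_Schwarz_ineq_sum[of g "adjacency_op V E f" V] inner by simp
  also have "\<dots> \<le> (\<Sum>x\<in>V. (g x)^2) * (\<theta>^2 * (\<Sum>y\<in>V. (f y)^2))"
    by (intro mult_left_mono spectral sum_f) (simp add: sum_nonneg)
  also have "\<dots> = (s * t) * (\<theta>^2 * ((N - s) * (N - t))) / N^2"
    using sum_square_centered_indicator[OF V S \<open>V \<noteq> {}\<close>]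
      sum_square_centered_indicator[OF V T \<open>V \<noteq> {}\<close>]
    by (simp add: f_def g_def s_def t_def N_def power2_eq_square field_simps)
  finally have "(s * t) * (real d^2 * (s * t)) \<le> (s * t) * (\<theta>^2 * ((N - s) * (N - t)))"
    using st by (simp add: power2_eq_square field_simps)
  then have "real d^2 * (s * t) \<le> \<theta>^2 * ((N - s) * (N - t))"
    using st by (simp add: mult_le_cancel_left_pos)
  then show ?thesis
    using mult_le_of_mult_complements_le[of s N t "real d" \<theta>] st \<open>0 \<le> \<theta>\<close>
    unfolding N_def s_def t_def by simp
qed

section \<open>The odd graph\<close>

lemma odd_graph_degree:
  assumes "X \<in> kneser_vertices (2*k+1) k"
  shows "card {Y \<in> kneser_vertices (2*k+1) k. kneser_adj X Y} = k + 1"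
proof -
  have X: "X \<subseteq> {1..2*k+1}" "card X = k" using assms unfolding kneser_vertices_def by auto
  have "{Y \<in> kneser_vertices (2*k+1) k. kneser_adj X Y} = {Y \<in> kneser_vertices (2*k+1) k. Y \<subseteq> {1..2*k+1} - X}"
    unfolding kneser_vertices_def kneser_adj_def by blast
  also have "card \<dots> = card ({1..2*k+1} - X) choose k" by (rule card_kneser_vertices_subset) auto
  also have "card ({1..2*k+1} - X) = k + 1" using X by (subst card_Diff_subset) (auto intro: finite_subset)
  finally show ?thesis by simp
qed

text \<open>Entrywise form of \<open>A\<^sup>2 = U D + I\<close> on layer \<open>k\<close>.\<close>

lemma card_common_kneser_neighbours:
  assumes "k \<ge> 1" "Y \<in> kneser_vertices (2*k+1) k" "Y' \<in> kneser_vertices (2*k+1) k"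
  shows "real (card {X \<in> kneser_vertices (2*k+1) k. kneser_adj X Y \<and> kneser_adj X Y'})
       = real (card {Z \<in> kneser_vertices (2*k+1) (k-1). Z \<subseteq> Y \<and> Z \<subseteq> Y'}) + of_bool (Y = Y')"
proof -
  let ?n = "2*k+1"
  have Y: "Y \<subseteq> {1..?n}" "Y' \<subseteq> {1..?n}" "card Y = k" "card Y' = k"
    using assms unfolding kneser_vertices_def by auto
  have fin: "finite Y" "finite Y'" using Y finite_subset by blast+
  define a where "a = card (Y \<inter> Y')"
  have "{X \<in> kneser_vertices ?n k. kneser_adj X Y \<and> kneser_adj X Y'}
      = {X \<in> kneser_vertices ?n k. X \<subseteq> {1..?n} - (Y \<union> Y')}"
    unfolding kneser_vertices_def kneser_adj_def by blast
  then have neighbours: "card {X \<in> kneser_vertices ?n k. kneser_adj X Y \<and> kneser_adj X Y'}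
      = card ({1..?n} - (Y \<union> Y')) choose k"
    by (simp add: card_kneser_vertices_subset)
  have "card ({1..?n} - (Y \<union> Y')) = ?n - card (Y \<union> Y')"
    using Y by (subst card_Diff_subset) (auto intro: finite_subset)
  also have "card (Y \<union> Y') = 2 * k - a"
    using card_Un_Int[OF fin] Y unfolding a_def by simp
  finally have outside: "card ({1..?n} - (Y \<union> Y')) = Suc a"
    using card_mono[OF fin(1), of "Y \<inter> Y'"] Y unfolding a_def by simp
  have common: "card {Z \<in> kneser_vertices ?n (k-1). Z \<subseteq> Y \<and> Z \<subseteq> Y'} = a choose (k-1)"
    unfolding a_def using Y by (simp add: card_kneser_vertices_common_subset)
  have "a \<le> k" unfolding a_def using card_mono[OF fin(1), of "Y \<inter> Y'"] Y by simp
  moreover have "a = k \<longleftrightarrow> Y = Y'"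
    using card_subset_eq[OF fin(1), of "Y \<inter> Y'"] card_subset_eq[OF fin(2), of "Y \<inter> Y'"] Y
    unfolding a_def by auto
  ultimately have "a choose k = of_bool (Y = Y')" by auto
  moreover have "Suc a choose k = (a choose (k-1)) + (a choose k)"
    using binomial_Suc_Suc[of a "k-1"] assms(1) by simp
  ultimately show ?thesis using neighbours outside common by simp
qed

lemma odd_graph_sum_square_adjacency_op:
  assumes "k \<ge> 1"
  shows "(\<Sum>X\<in>kneser_vertices (2*k+1) k. (adjacency_op (kneser_vertices (2*k+1) k) kneser_adj f X)^2)
       = (\<Sum>Z\<in>kneser_vertices (2*k+1) (k-1). (superset_sum (2*k+1) k f Z)^2)
         + (\<Sum>Y\<in>kneser_vertices (2*k+1) k. (f Y)^2)"
proof -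
  let ?V = "kneser_vertices (2*k+1) k"
  let ?common = "\<lambda>Y Y'. real (card {Z \<in> kneser_vertices (2*k+1) (k-1). Z \<subseteq> Y \<and> Z \<subseteq> Y'})"
  have "(\<Sum>X\<in>?V. (adjacency_op ?V kneser_adj f X)^2)
     = (\<Sum>Y\<in>?V. \<Sum>Y'\<in>?V. f Y * f Y' * real (card {X \<in> ?V. kneser_adj X Y \<and> kneser_adj X Y'}))"
    unfolding adjacency_op_def by (rule sum_square_incidence_sum) simp_all
  also have "\<dots> = (\<Sum>Y\<in>?V. \<Sum>Y'\<in>?V. f Y * f Y' * ?common Y Y' + (if Y = Y' then (f Y)^2 else 0))"
  proof (intro sum.cong refl)
    fix Y Y' assume "Y \<in> ?V" "Y' \<in> ?V"
    note common_neighbours = card_common_kneser_neighbours[OF assms this]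
    show "f Y * f Y' * real (card {X \<in> ?V. kneser_adj X Y \<and> kneser_adj X Y'})
             = f Y * f Y' * ?common Y Y' + (if Y = Y' then (f Y)^2 else 0)"
      unfolding common_neighbours by (simp add: distrib_left power2_eq_square)
  qed
  also have "\<dots> = (\<Sum>Y\<in>?V. \<Sum>Y'\<in>?V. f Y * f Y' * ?common Y Y') + (\<Sum>Y\<in>?V. (f Y)^2)"
    by (simp add: sum.distrib)
  also have "(\<Sum>Y\<in>?V. \<Sum>Y'\<in>?V. f Y * f Y' * ?common Y Y')
      = (\<Sum>Z\<in>kneser_vertices (2*k+1) (k-1). (superset_sum (2*k+1) k f Z)^2)"
    unfolding superset_sum_def by (rule sum_square_incidence_sum[symmetric]) simp_all
  finally show ?thesis .
qed

lemma odd_graph_sum_square_adjacency_op_le: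
  assumes "k \<ge> 1" "(\<Sum>Y\<in>kneser_vertices (2*k+1) k. f Y) = 0"
  shows "(\<Sum>X\<in>kneser_vertices (2*k+1) k. (adjacency_op (kneser_vertices (2*k+1) k) kneser_adj f X)^2)
       \<le> (real k)^2 * (\<Sum>Y\<in>kneser_vertices (2*k+1) k. (f Y)^2)"
proof -
  have "(\<Sum>Z\<in>kneser_vertices (2*k+1) (k-1). (superset_sum (2*k+1) k f Z)^2)
        \<le> (real k - 1) * (real (2*k+1) - real k) * (\<Sum>Y\<in>kneser_vertices (2*k+1) k. (f Y)^2)"
    by (rule sum_square_superset_sum_le) (use assms in auto)
  then show ?thesis
    unfolding odd_graph_sum_square_adjacency_op[OF assms(1)] by (simp add: algebra_simps power2_eq_square)
qed

lemma odd_graph_cross_independent_card_mult_le: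
  assumes "k \<ge> 1"
    and S: "S \<subseteq> kneser_vertices (2*k+1) k" and T: "T \<subseteq> kneser_vertices (2*k+1) k"
    and no_edges: "\<And>X Y. X \<in> T \<Longrightarrow> Y \<in> S \<Longrightarrow> \<not> kneser_adj X Y"
  shows "card S * card T \<le> ((2*k) choose (k-1))^2"
proof -
  let ?V = "kneser_vertices (2*k+1) k"
  have "(real (k + 1) + real k)^2 * (real (card S) * real (card T)) \<le> (real k)^2 * real (card ?V)^2"
  proof (rule cross_independent_card_mult_le[OF _ _ odd_graph_degree odd_graph_sum_square_adjacency_op_le])
    show "kneser_adj X Y \<longleftrightarrow> kneser_adj Y X" for X Y by (auto simp: kneser_adj_def)
  qed (use assms in auto)
  then have "real ((2*k+1)^2 * (card S * card T)) \<le> real ((k * card ?V)^2)"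
    by (simp add: power_mult_distrib algebra_simps)
  then have "(2*k+1)^2 * (card S * card T) \<le> (k * card ?V)^2"
    by (simp only: of_nat_le_iff)
  also have "k * card ?V = (2*k+1) * ((2*k) choose (k-1))"
    using Suc_times_binomial_eq[of "2*k" "k-1"] assms(1) by (simp add: card_kneser_vertices)
  finally have "(2*k+1)^2 * (card S * card T) \<le> (2*k+1)^2 * ((2*k) choose (k-1))^2"
    by (simp only: power_mult_distrib)
  then show ?thesis by (subst (asm) mult_le_cancel1) simp
qed

lemma card_boundary_partition:
  assumes "finite V" "S \<subseteq> V"
  shows "card S + card (boundary V E S) + card {x \<in> V - S. \<forall>y\<in>S. \<not> E x y} = card V"
proof -
  let ?T = "{x \<in> V - S. \<forall>y\<in>S. \<not> E x y}"
  have "V = (S \<union> boundary V E S) \<union> ?T" using assms(2) unfolding boundary_def by auto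
  moreover have "S \<inter> boundary V E S = {}" "(S \<union> boundary V E S) \<inter> ?T = {}"
    unfolding boundary_def by auto
  moreover have "finite S" "finite (boundary V E S)" "finite ?T"
    using assms finite_subset unfolding boundary_def by auto
  ultimately show ?thesis by (metis card_Un_disjoint finite_UnI)
qed

lemma add_le_of_mult_le_square:
  fixes r s t R :: real
  assumes "0 < r" "r \<le> s" "s \<le> R" "s * t \<le> R^2"
  shows "s + t \<le> r + R^2 / r"
proof -
  have "0 < s" using assms by simp
  have "r * s \<le> R^2" unfolding power2_eq_square by (rule mult_mono) (use assms in auto)
  then have "(r * s) * (s - r) \<le> R^2 * (s - r)" by (rule mult_right_mono) (use assms in simp)
  then have "s + R^2 / s \<le> r + R^2 / r" using assms \<open>0 < s\<close> by (simp add: field_simps power2_eq_square)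
  moreover have "t \<le> R^2 / s" using assms \<open>0 < s\<close> by (simp add: field_simps mult.commute)
  ultimately show ?thesis by simp
qed

lemma odd_graph_card_boundary_ge:
  assumes "k \<ge> 1" "0 < r" and S: "S \<subseteq> kneser_vertices (2*k+1) k"
    and "r \<le> real (card S)" "card S \<le> (2*k) choose (k-1)"
  shows "real ((2*k+1) choose k) - (real ((2*k) choose (k-1)))^2 / r - r
       \<le> real (card (boundary (kneser_vertices (2*k+1) k) kneser_adj S))"
proof -
  let ?V = "kneser_vertices (2*k+1) k" and ?R = "(2*k) choose (k-1)"
  define T where "T = {X \<in> ?V - S. \<forall>Y\<in>S. \<not> kneser_adj X Y}"
  have partition: "card S + card (boundary ?V kneser_adj S) + card T = (2*k+1) choose k"
    unfolding T_def card_kneser_vertices[symmetric] by (rule card_boundary_partition) (use S in simp_all)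
  have "card S * card T \<le> ?R^2"
    by (rule odd_graph_cross_independent_card_mult_le) (use assms in \<open>auto simp: T_def\<close>)
  then have "real (card S) * real (card T) \<le> (real ?R)^2"
    by (metis of_nat_le_iff of_nat_mult of_nat_power)
  then have "real (card S) + real (card T) \<le> r + (real ?R)^2 / r"
    by (rule add_le_of_mult_le_square[rotated 3]) (use assms in simp_all)
  with partition show ?thesis by (simp flip: of_nat_add)
qed

theorem lemma3p4:
  fixes k :: nat and rstar :: real
  assumes "k \<ge> 1"
    and "0 < rstar" and "rstar \<le> real ((2*k) choose (k-1))"
  shows "Min {card (boundary (kneser_vertices (2*k+1) k) kneser_adj S) | S.
              S \<subseteq> kneser_vertices (2*k+1) k \<and> rstar \<le> real (card S)
              \<and> card S \<le> (2*k) choose (k-1)}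
         \<ge> real ((2*k+1) choose k) - (real ((2*k) choose (k-1)))^2 / rstar - rstar"
proof -
  let ?V = "kneser_vertices (2*k+1) k" and ?R = "(2*k) choose (k-1)"
  let ?admissible = "{S. S \<subseteq> ?V \<and> rstar \<le> real (card S) \<and> card S \<le> ?R}"
  define boundaries where "boundaries = (\<lambda>S. card (boundary ?V kneser_adj S)) ` ?admissible"
  have "?R \<le> card ?V"
    using binomial_Suc_Suc[of "2*k" "k-1"] assms(1) by (simp add: card_kneser_vertices)
  moreover have "nat \<lceil>rstar\<rceil> \<le> ?R" using assms(3) by (simp add: nat_le_iff ceiling_le_iff)
  ultimately obtain S0 where "S0 \<subseteq> ?V" "card S0 = nat \<lceil>rstar\<rceil>"
    using obtain_subset_with_card_n[of "nat \<lceil>rstar\<rceil>" ?V] by auto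
  moreover have "rstar \<le> real (nat \<lceil>rstar\<rceil>)" by linarith
  ultimately have "S0 \<in> ?admissible" using \<open>nat \<lceil>rstar\<rceil> \<le> ?R\<close> by simp
  then have "boundaries \<noteq> {}" "finite boundaries" unfolding boundaries_def by auto
  then have "Min boundaries \<in> boundaries" by (rule Min_in[rotated])
  then obtain S where "S \<in> ?admissible" "Min boundaries = card (boundary ?V kneser_adj S)"
    unfolding boundaries_def by blast
  moreover have "{card (boundary ?V kneser_adj S) | S. S \<subseteq> ?V \<and> rstar \<le> real (card S) \<and> card S \<le> ?R}
      = boundaries"
    unfolding boundaries_def by blast
  ultimately show ?thesis using odd_graph_card_boundary_ge[OF assms(1,2)] by simp
qed

end
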